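(* Let $w\in\{a,b\}^*$ (with $a\ne b$) satisfy $|w|>7$ and $l(w)=4$. Then every element of $\mathtt{BR}(w)$ is rich if and only if $w$ or its complement $w^c$ is of the form $ab^{n_2}ab^{n_4}$ or $a^{n_1}ba^{n_3}b$ (with $n_i\ge1$), or belongs to $S=\{a^{n_1}b^{n_2}a^{n_3}b^{n_4} : (n_2,n_4),(n_1,n_3)\in\{(3,1),(2,2),(1,3)\}\}$.
   Context: For a word $w=w_1\cdots w_n$, $|w|=n$, $w^R=w_n\cdots w_1$; $w$ is a palindrome if $w=w^R$; a factor of $w$ is a word $u$ with $w=puq$. A word $w$ is rich if the number of distinct nonempty palindromic factors of $w$ equals $|w|$. The block reversal of a nonempty word $w$ is $\mathtt{BR}(w)=\{B_t\cdots B_1 : w=B_1\cdots B_t,\ t\ge1,\ \text{each } B_i \text{ nonempty}\}$. Every nonempty word has a unique run-length encoding $w=c_1^{n_1}\cdots c_k^{n_k}$ with letters $c_i\neq c_{i+1}$, $n_i\ge1$; $l(w)=k$. The complement $w^c$ of $w\in\{a,b\}^*$ is obtained by exchanging $a$ and $b$. *)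

theory Defs
  imports Main
begin

definition palindrome :: "'a list \<Rightarrow> bool" where
  "palindrome w \<longleftrightarrow> rev w = w"

definition factors :: "'a list \<Rightarrow> 'a list set" where
  "factors w = {u. \<exists>p q. w = p @ u @ q}"

definition rich :: "'a list \<Rightarrow> bool" where
  "rich w \<longleftrightarrow> card {u \<in> factors w. u \<noteq> [] \<and> palindrome u} = length w"

definition BR :: "'a list \<Rightarrow> 'a list set" where
  "BR w = {concat (rev Bs) | Bs. Bs \<noteq> [] \<and> concat Bs = w \<and> (\<forall>B \<in> set Bs. B \<noteq> [])}"

definition runs :: "'a list \<Rightarrow> nat" where
  "runs w = length (remdups_adj w)"

definition compl_ab :: "'a \<Rightarrow> 'a \<Rightarrow> 'a list \<Rightarrow> 'a list" where
  "compl_ab a b w = map (\<lambda>x. if x = a then b else if x = b then a else x) w"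

definition good_form :: "'a \<Rightarrow> 'a \<Rightarrow> 'a list \<Rightarrow> bool" where
  "good_form a b w \<longleftrightarrow>
     (\<exists>n2 n4. n2 \<ge> 1 \<and> n4 \<ge> 1 \<and> w = [a] @ replicate n2 b @ [a] @ replicate n4 b) \<or>
     (\<exists>n1 n3. n1 \<ge> 1 \<and> n3 \<ge> 1 \<and> w = replicate n1 a @ [b] @ replicate n3 a @ [b]) \<or>
     (\<exists>n1 n2 n3 n4. (n2, n4) \<in> {(3,1),(2,2),(1,3)} \<and> (n1, n3) \<in> {(3,1),(2,2),(1,3)} \<and>
        w = replicate n1 a @ replicate n2 b @ replicate n3 a @ replicate n4 b)"

end

(* Appending a letter to a word creates at most one new palindromic factor, namely a palindromic
   suffix. Hence a word has at most as many palindromic factors as letters, richness passes to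
   factors, and a word is not rich as soon as one appended letter creates no new palindrome.
   The last letter of x x y^m x y^n x x with m \<noteq> n is such a letter, so no word containing
   this frame is rich.

   For w = x^p y^q x^r y^s outside the three families, cutting w into at most four blocks and
   reversing their order produces the frame; the reverse-complement symmetry
   (p, q, r, s) \<mapsto> (s, r, q, p) reduces this to q + s \<ge> 5, where four cuttings suffice.
   Conversely, a word in which one letter occurs exactly twice is rich, which settles the first two
   families because block reversal preserves letter counts; the nine words of S are checked by
   evaluation. *)

theory Submission
  imports Defs "HOL-Library.Sublist"
begin

section \<open>Palindromic factors\<close>

lemma factors_eq_sublist: "factors w = {u. sublist u w}"
  by (auto simp: factors_def sublist_def)

definition palfactors :: "'a list \<Rightarrow> 'a list set" where
  "palfactors w = {u. sublist u w \<and> u \<noteq> [] \<and> rev u = u}"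

lemma rich_iff_card_palfactors: "rich w \<longleftrightarrow> card (palfactors w) = length w"
  by (simp add: rich_def palfactors_def palindrome_def factors_eq_sublist)

lemma finite_palfactors: "finite (palfactors w)"
  by (rule finite_subset[of _ "set (sublists w)"]) (auto simp: palfactors_def)

lemma new_palfactor_is_suffix:
  "u \<in> palfactors (w @ [c]) - palfactors w \<Longrightarrow> suffix u (w @ [c])"
  by (auto simp: palfactors_def sublist_snoc)

lemma shorter_palindromic_suffix_in_prefix:
  assumes "suffix u (w @ [c])" "suffix u' (w @ [c])" "rev u = u" "rev u' = u'"
    and "length u < length u'"
  shows "sublist u w"
proof -
  obtain u'' d where u': "u' = u'' @ [d]"
    using assms(5) by (cases u' rule: rev_cases) auto
  have "suffix u u'"
    using suffix_same_cases[OF assms(1,2)] assms(5) by (auto dest: suffix_length_le)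
  then have "prefix u u'"
    using assms(3,4) by (metis suffix_to_prefix)
  then have "prefix u u''"
    using assms(5) u' by (auto simp: prefix_snoc)
  moreover have "suffix u'' w"
    using assms(2) u' by simp
  ultimately show ?thesis
    by (meson prefix_imp_sublist suffix_imp_sublist sublist_order.order_trans)
qed

lemma card_palfactors_snoc: "card (palfactors (w @ [c])) \<le> Suc (card (palfactors w))"
proof -
  let ?D = "palfactors (w @ [c]) - palfactors w"
  have "u = u'" if "u \<in> ?D" "u' \<in> ?D" for u u'
  proof -
    note suffixes = that[THEN new_palfactor_is_suffix]
    have pal: "rev u = u" "rev u' = u'" and new: "\<not> sublist u w" "\<not> sublist u' w"
      using that by (auto simp: palfactors_def)
    have "\<not> length u < length u'" "\<not> length u' < length u"
      using shorter_palindromic_suffix_in_prefix[OF suffixes pal]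
        shorter_palindromic_suffix_in_prefix[OF suffixes(2,1) pal(2,1)] new
      by blast+
    then have "length u = length u'" by simp
    then show "u = u'"
      using suffix_same_cases[OF suffixes] by (auto simp: suffix_def)
  qed
  then have "card ?D \<le> 1"
    using card_le_Suc0_iff_eq[of ?D] by (simp add: finite_palfactors)
  moreover have "card (palfactors (w @ [c])) \<le> card (palfactors w \<union> ?D)"
    by (rule card_mono) (auto simp: finite_palfactors)
  moreover have "card (palfactors w \<union> ?D) \<le> card (palfactors w) + card ?D"
    by (rule card_Un_le)
  ultimately show ?thesis by simp
qed

lemma card_palfactors_append: "card (palfactors (u @ v)) \<le> card (palfactors u) + length v"
proof (induction v rule: rev_induct)
  case (snoc c v)
  then show ?case using card_palfactors_snoc[of "u @ v" c] by simp
qed simp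

lemma card_palfactors_le_length: "card (palfactors w) \<le> length w"
  using card_palfactors_append[of "[]" w] by (simp add: palfactors_def cong: conj_cong)

lemma palfactors_rev: "palfactors (rev w) = palfactors w"
  by (auto simp: palfactors_def sublist_rev_right)

lemma rich_rev_iff: "rich (rev w) \<longleftrightarrow> rich w"
  by (simp add: rich_iff_card_palfactors palfactors_rev)

lemma rich_sublist:
  assumes "rich w" "sublist u w"
  shows "rich u"
proof -
  obtain p s where w: "w = p @ u @ s"
    using assms(2) by (auto simp: sublist_def)
  have "card (palfactors w) \<le> card (palfactors (p @ u)) + length s"
    using card_palfactors_append[of "p @ u" s] by (simp add: w)
  also have "card (palfactors (p @ u)) = card (palfactors (rev u @ rev p))"
    using palfactors_rev[of "p @ u"] by simp
  also have "\<dots> \<le> card (palfactors (rev u)) + length p"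
    using card_palfactors_append[of "rev u" "rev p"] by simp
  finally have "length u \<le> card (palfactors u)"
    using assms(1) by (simp add: w rich_iff_card_palfactors palfactors_rev)
  then show ?thesis
    using card_palfactors_le_length[of u] by (simp add: rich_iff_card_palfactors)
qed

lemma not_rich_snoc:
  assumes "\<And>u. suffix u (w @ [c]) \<Longrightarrow> u \<noteq> [] \<Longrightarrow> rev u = u \<Longrightarrow> sublist u w"
  shows "\<not> rich (w @ [c])"
proof -
  have "palfactors (w @ [c]) \<subseteq> palfactors w"
  proof
    fix u assume u: "u \<in> palfactors (w @ [c])"
    show "u \<in> palfactors w"
    proof (rule ccontr)
      assume new: "u \<notin> palfactors w"
      have "sublist u w"
        using assms[OF new_palfactor_is_suffix[OF DiffI[OF u new]]] u
        unfolding palfactors_def by simp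
      then show False
        using u new unfolding palfactors_def by simp
    qed
  qed
  then have "card (palfactors (w @ [c])) \<le> length w"
    using card_mono[OF finite_palfactors] card_palfactors_le_length le_trans by blast
  then show ?thesis by (simp add: rich_iff_card_palfactors)
qed

lemma palfactors_map:
  assumes "inj f"
  shows "palfactors (map f w) = map f ` palfactors w"
proof
  show "palfactors (map f w) \<subseteq> map f ` palfactors w"
  proof
    fix u assume u: "u \<in> palfactors (map f w)"
    then obtain u' where "sublist u' w" "u = map f u'"
      unfolding palfactors_def using sublist_map_rightE by blast
    then show "u \<in> map f ` palfactors w"
      using u inj_map_eq_map[OF assms, of "rev u'" u']
      by (auto simp: palfactors_def rev_map)
  qed
qed (auto simp: palfactors_def map_mono_sublist rev_map)

lemma rich_map_iff:
  assumes "inj f"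
  shows "rich (map f w) \<longleftrightarrow> rich w"
proof -
  have "inj_on (map f) (palfactors w)"
    using inj_mapI[OF assms] by (rule inj_on_subset) simp
  then show ?thesis
    by (simp add: rich_iff_card_palfactors palfactors_map[OF assms] card_image)
qed

lemma frame_xxy_only_at_start:
  assumes "x \<noteq> y" "0 < m" "0 < n"
    and "[x, x] @ replicate m y @ [x] @ replicate n y @ [x, x] = p @ x # x # y # t"
  shows "p = []"
proof -
  let ?W = "[x, x] @ replicate m y @ [x] @ replicate n y @ [x, x]"
  have "?W ! length p = x" "?W ! Suc (length p) = x" "?W ! Suc (Suc (length p)) = y"
    "Suc (Suc (length p)) < length ?W"
    unfolding assms(4) by (simp_all add: nth_append)
  then show ?thesis
    using assms(1-3) by (auto simp: nth_append nth_Cons split: if_splits nat.splits)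
qed

lemma frame_palindromic_suffix:
  assumes "x \<noteq> y" "0 < m" "0 < n"
    and "suffix u ([x, x] @ replicate m y @ [x] @ replicate n y @ [x, x])" (is "suffix u ?W")
    and "rev u = u" "2 < length u"
  shows "u = ?W"
proof -
  have "suffix [y, x, x] ?W"
    by (rule suffixI[of _ "x # x # replicate m y @ x # replicate (n - 1) y"])
      (use assms(3) in \<open>cases n, simp_all add: replicate_append_same\<close>)
  from suffix_same_cases[OF assms(4) this] have "suffix [y, x, x] u"
  proof
    assume "suffix u [y, x, x]"
    then obtain zs where zs: "[y, x, x] = zs @ u" by (auto simp: suffix_def)
    have "3 = length zs + length u" using arg_cong[OF zs, of length] by simp
    then have "length zs = 0" using assms(6) by linarith
    with zs show ?thesis by simp
  qed
  then obtain zs where "u = zs @ [y, x, x]"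
    by (auto simp: suffix_def)
  then have u: "u = x # x # y # rev zs"
    using assms(5) by (metis rev.simps rev_append append_Cons append_Nil)
  obtain p where "?W = p @ u"
    using assms(4) by (auto simp: suffix_def)
  then show ?thesis
    using frame_xxy_only_at_start[OF assms(1-3), of p "rev zs"] u by simp
qed

lemma not_rich_frame:
  assumes "x \<noteq> y" "m \<noteq> n" "0 < m" "0 < n"
  shows "\<not> rich ([x, x] @ replicate m y @ [x] @ replicate n y @ [x, x])" (is "\<not> rich ?W")
proof -
  define w where "w = [x, x] @ replicate m y @ [x] @ replicate n y @ [x]"
  have W: "?W = w @ [x]"
    by (simp add: w_def)
  have "sublist u w" if u: "suffix u (w @ [x])" "u \<noteq> []" "rev u = u" for u
  proof (cases "length u \<le> 2")
    case True
    have "suffix [x, x] (w @ [x])"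
      by (rule suffixI[of _ "x # x # replicate m y @ x # replicate n y"]) (simp add: w_def)
    from suffix_same_cases[OF u(1) this] have "u = [x] \<or> u = [x, x]"
      using True u(2) by (auto simp: suffix_def Cons_eq_append_conv append_eq_Cons_conv)
    moreover have "prefix [x, x] w"
      by (simp add: w_def)
    ultimately show ?thesis
      by (auto intro: sublist_order.order_trans[OF _ prefix_imp_sublist])
  next
    case False
    then have "u = ?W"
      using frame_palindromic_suffix[OF assms(1,3,4) u(1)[folded W] u(3)] by simp
    then have "rev ?W = ?W"
      using u(3) by simp
    then have "replicate n y @ x # replicate m y = replicate m y @ x # replicate n y"
      by simp
    then have "m = n"
      using assms(1) by (metis le_neq_implies_less length_replicate nat_le_linear
          nth_append_left nth_append_length nth_replicate)
    with assms(2) show ?thesis ..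
  qed
  then show ?thesis
    unfolding W by (rule not_rich_snoc)
qed

lemma sublist_replicate: "l \<le> a \<Longrightarrow> sublist (replicate l y) (replicate a y)"
  by (metis le_add_diff_inverse replicate_add sublist_append_rightI)

lemma sublist_replicate_around:
  assumes "l \<le> a" "l \<le> b"
  shows "sublist (replicate l y @ z @ replicate l y) (replicate a y @ z @ replicate b y)"
proof -
  have "replicate a y @ z @ replicate b y
      = replicate (a - l) y @ (replicate l y @ z @ replicate l y) @ replicate (b - l) y"
    using assms by (simp flip: replicate_add)
  then show ?thesis by (metis sublist_appendI)
qed

lemma palfactors_two_occurrences:
  fixes i j k l :: nat and x y :: 'a
  defines "v \<equiv> replicate i y @ x # replicate j y @ x # replicate k y"
  shows "1 \<le> l \<Longrightarrow> l \<le> max i (max j k) \<Longrightarrow> replicate l y \<in> palfactors v"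
    and "l \<le> max (min i j) (min j k) \<Longrightarrow> replicate l y @ [x] @ replicate l y \<in> palfactors v"
    and "l \<le> min i k \<Longrightarrow> replicate l y @ (x # replicate j y @ [x]) @ replicate l y \<in> palfactors v"
proof -
  have sub_i: "sublist (replicate i y) v"
    unfolding v_def by (rule sublist_append_rightI)
  have sub_j: "sublist (replicate j y) v"
    using sublist_appendI[of "replicate j y" "replicate i y @ [x]" "x # replicate k y"]
    by (simp add: v_def)
  have sub_k: "sublist (replicate k y) v"
    using sublist_append_leftI[of "replicate k y" "replicate i y @ x # replicate j y @ [x]"]
    by (simp add: v_def)
  have sub_ij: "sublist (replicate i y @ [x] @ replicate j y) v"
    using sublist_append_rightI[of "replicate i y @ [x] @ replicate j y" "x # replicate k y"]
    by (simp add: v_def)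
  have sub_jk: "sublist (replicate j y @ [x] @ replicate k y) v"
    using sublist_append_leftI[of "replicate j y @ [x] @ replicate k y" "replicate i y @ [x]"]
    by (simp add: v_def)
  show "replicate l y \<in> palfactors v" if "1 \<le> l" "l \<le> max i (max j k)"
  proof -
    have "l \<le> i \<or> l \<le> j \<or> l \<le> k"
      using that(2) by (simp add: le_max_iff_disj)
    then have "sublist (replicate l y) v"
      using sublist_order.order_trans[OF sublist_replicate sub_i]
        sublist_order.order_trans[OF sublist_replicate sub_j]
        sublist_order.order_trans[OF sublist_replicate sub_k] by blast
    then show ?thesis
      using that(1) by (simp add: palfactors_def)
  qed
  show "replicate l y @ [x] @ replicate l y \<in> palfactors v" if "l \<le> max (min i j) (min j k)"
  proof -
    have "l \<le> i \<and> l \<le> j \<or> l \<le> j \<and> l \<le> k"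
      using that by (simp add: le_max_iff_disj)
    then have "sublist (replicate l y @ [x] @ replicate l y) v"
      using sublist_order.order_trans[OF sublist_replicate_around sub_ij]
        sublist_order.order_trans[OF sublist_replicate_around sub_jk] by blast
    then show ?thesis
      by (simp add: palfactors_def)
  qed
  show "replicate l y @ (x # replicate j y @ [x]) @ replicate l y \<in> palfactors v"
    if "l \<le> min i k"
    using that sublist_replicate_around[of l i k y "x # replicate j y @ [x]"]
    by (simp add: palfactors_def v_def)
qed

text \<open>The three bounds below are the largest, the middle and the smallest of \<open>i, j, k\<close>, so the
  three families of palindromes have \<open>i + j + k + 2\<close> members in total.\<close>
lemma rich_two_occurrences:
  assumes "x \<noteq> y"
  shows "rich (replicate i y @ x # replicate j y @ x # replicate k y)" (is "rich ?v")
proof -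
  let ?P0 = "(\<lambda>l. replicate l y) ` {1..max i (max j k)}"
  let ?P1 = "(\<lambda>l. replicate l y @ [x] @ replicate l y) ` {..max (min i j) (min j k)}"
  let ?P2 = "(\<lambda>l. replicate l y @ (x # replicate j y @ [x]) @ replicate l y) ` {..min i k}"
  have "?P0 \<union> ?P1 \<union> ?P2 \<subseteq> palfactors ?v"
    using palfactors_two_occurrences[where i = i and j = j and k = k and x = x and y = y] by auto
  moreover have "card (?P0 \<union> ?P1 \<union> ?P2) = length ?v"
  proof -
    have "card ?P0 = max i (max j k)" "card ?P1 = Suc (max (min i j) (min j k))"
      "card ?P2 = Suc (min i k)"
      by (subst card_image, auto intro!: inj_onI dest: arg_cong[where f = length])+
    moreover have "?P0 \<inter> ?P1 = {}" "?P0 \<inter> ?P2 = {}" "?P1 \<inter> ?P2 = {}"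
      using assms by (auto dest: arg_cong[where f = "\<lambda>u. count_list u x"])
    ultimately show ?thesis
      by (simp add: card_Un_disjoint Int_Un_distrib2 max_def min_def)
  qed
  ultimately have "length ?v \<le> card (palfactors ?v)"
    using card_mono[OF finite_palfactors, of "?P0 \<union> ?P1 \<union> ?P2" ?v] by simp
  then show ?thesis
    using card_palfactors_le_length[of ?v] by (simp add: rich_iff_card_palfactors)
qed

section \<open>Block reversal\<close>

definition BR_rich :: "'a list \<Rightarrow> bool" where
  "BR_rich w \<longleftrightarrow> (\<forall>v \<in> BR w. rich v)"

lemma concat_rev_in_BR:
  assumes "concat Bs = w" "w \<noteq> []"
  shows "concat (rev Bs) \<in> BR w"
proof -
  let ?Cs = "filter (\<lambda>B. B \<noteq> []) Bs"
  have "concat ?Cs = w" "concat (rev ?Cs) = concat (rev Bs)"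
    using assms(1) by (induction Bs arbitrary: w) auto
  moreover have "?Cs \<noteq> []"
    using calculation(1) assms(2) by auto
  ultimately show ?thesis
    unfolding BR_def by (intro CollectI exI[of _ ?Cs]) auto
qed

lemma concat_eq_map_conv:
  "concat Bs = map f w \<Longrightarrow> \<exists>Cs. Bs = map (map f) Cs \<and> concat Cs = w"
proof (induction Bs arbitrary: w)
  case (Cons B Bs)
  then have "map f w = B @ concat Bs" by simp
  then obtain w1 w2 where "w = w1 @ w2" "B = map f w1" "concat Bs = map f w2"
    unfolding map_eq_append_conv by blast
  with Cons.IH[of w2] show ?case
    by (metis concat.simps(2) list.simps(9))
qed simp

lemma BR_map: "BR (map f w) = map f ` BR w"
proof
  show "BR (map f w) \<subseteq> map f ` BR w"
  proof
    fix v assume "v \<in> BR (map f w)"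
    then obtain Bs where Bs: "v = concat (rev Bs)" "Bs \<noteq> []" "concat Bs = map f w"
        "\<forall>B\<in>set Bs. B \<noteq> []"
      unfolding BR_def by blast
    obtain Cs where Cs: "Bs = map (map f) Cs" "concat Cs = w"
      using concat_eq_map_conv[OF Bs(3)] by blast
    have "concat (rev Cs) \<in> BR w"
      using Bs Cs unfolding BR_def by auto
    moreover have "v = map f (concat (rev Cs))"
      using Bs(1) Cs(1) by (simp add: map_concat rev_map)
    ultimately show "v \<in> map f ` BR w" by blast
  qed
next
  show "map f ` BR w \<subseteq> BR (map f w)"
  proof
    fix v assume "v \<in> map f ` BR w"
    then obtain Cs where Cs: "v = map f (concat (rev Cs))" "Cs \<noteq> []" "concat Cs = w"
        "\<forall>C\<in>set Cs. C \<noteq> []"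
      unfolding BR_def by blast
    show "v \<in> BR (map f w)"
      unfolding BR_def
      by (intro CollectI exI[of _ "map (map f) Cs"]) (use Cs in \<open>auto simp: map_concat rev_map\<close>)
  qed
qed

lemma BR_rich_map_iff:
  assumes "inj f"
  shows "BR_rich (map f w) \<longleftrightarrow> BR_rich w"
  by (simp add: BR_rich_def BR_map rich_map_iff[OF assms])

lemma BR_rich_compl_ab_iff: "BR_rich (compl_ab a b w) \<longleftrightarrow> BR_rich w"
proof -
  have "inj (\<lambda>z. if z = a then b else if z = b then a else z)"
    by (auto simp: inj_def)
  then show ?thesis
    unfolding compl_ab_def by (rule BR_rich_map_iff)
qed

lemma rev_in_BR:
  assumes "v \<in> BR w"
  shows "rev v \<in> BR (rev w)"
proof -
  obtain Bs where Bs: "v = concat (rev Bs)" "Bs \<noteq> []" "concat Bs = w" "\<forall>B\<in>set Bs. B \<noteq> []"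
    using assms unfolding BR_def by blast
  show ?thesis
    unfolding BR_def
    by (intro CollectI exI[of _ "rev (map rev Bs)"]) (use Bs in \<open>auto simp: rev_concat rev_map\<close>)
qed

lemma BR_rich_rev_iff: "BR_rich (rev w) \<longleftrightarrow> BR_rich w"
  unfolding BR_rich_def by (metis rev_in_BR rev_rev_ident rich_rev_iff)

lemma count_list_BR: "v \<in> BR w \<Longrightarrow> count_list v c = count_list w c"
proof -
  have "count_list (concat (rev Bs)) c = count_list (concat Bs) c" for Bs :: "'a list list"
    by (induction Bs) auto
  then show "v \<in> BR w \<Longrightarrow> count_list v c = count_list w c"
    unfolding BR_def by auto
qed

lemma set_BR: "v \<in> BR w \<Longrightarrow> set v = set w"
  unfolding BR_def by auto

lemma two_occurrences_conv:
  assumes "set v \<subseteq> {x, y}" "count_list v x = 2"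
  obtains i j k where "v = replicate i y @ x # replicate j y @ x # replicate k y"
proof -
  have replicate: "u = replicate (length u) y" if "set u \<subseteq> {x, y}" "x \<notin> set u" for u
    using that by (auto intro!: replicate_length_same[symmetric])
  obtain u1 v1 where v: "v = u1 @ x # v1" "x \<notin> set u1" "count_list v1 x = 1"
    using count_list_Suc_split_first[of v x 1] assms(2) by auto
  obtain u2 u3 where v1: "v1 = u2 @ x # u3" "x \<notin> set u2" "count_list u3 x = 0"
    using count_list_Suc_split_first[of v1 x 0] v(3) by auto
  show ?thesis
    using that[of "length u1" "length u2" "length u3"] replicate[of u1] replicate[of u2]
      replicate[of u3] assms(1) v v1 by (simp add: count_list_0_iff)
qed

lemma BR_rich_if_two_occurrences:
  assumes "x \<noteq> y" "set w \<subseteq> {x, y}" "count_list w x = 2"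
  shows "BR_rich w"
  unfolding BR_rich_def
proof
  fix v assume "v \<in> BR w"
  then have "set v \<subseteq> {x, y}" "count_list v x = 2"
    using assms set_BR count_list_BR by metis+
  then obtain i j k where "v = replicate i y @ x # replicate j y @ x # replicate k y"
    by (rule two_occurrences_conv)
  then show "rich v"
    using rich_two_occurrences[OF assms(1)] by simp
qed

fun factorizations :: "'a list \<Rightarrow> 'a list list list" where
  "factorizations [] = [[]]"
| "factorizations (x # xs) = concat (map (\<lambda>Bs. ([x] # Bs) #
     (case Bs of [] \<Rightarrow> [] | B # Cs \<Rightarrow> [(x # B) # Cs])) (factorizations xs))"

lemma set_factorizations: "set (factorizations w) = {Bs. concat Bs = w \<and> [] \<notin> set Bs}"
proof (induction w)
  case Nil
  have "concat Bs = [] \<and> [] \<notin> set Bs \<longleftrightarrow> Bs = []" for Bs :: "'a list list"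
    by (cases Bs) auto
  then show ?case by auto
next
  case (Cons x xs)
  show ?case
  proof (intro set_eqI iffI)
    fix Bs assume "Bs \<in> set (factorizations (x # xs))"
    then obtain Cs where "Cs \<in> set (factorizations xs)"
      and Bs: "Bs = [x] # Cs \<or> (\<exists>B Ds. Cs = B # Ds \<and> Bs = (x # B) # Ds)"
      by (auto split: list.splits)
    then have "concat Cs = xs" "[] \<notin> set Cs"
      using Cons.IH by blast+
    with Bs show "Bs \<in> {Bs. concat Bs = x # xs \<and> [] \<notin> set Bs}"
      by auto
  next
    fix Bs assume "Bs \<in> {Bs. concat Bs = x # xs \<and> [] \<notin> set Bs}"
    then obtain B Cs where Bs: "Bs = (x # B) # Cs" "concat (B # Cs) = xs" "[] \<notin> set Cs"
      by (cases Bs) (auto simp: append_eq_Cons_conv)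
    show "Bs \<in> set (factorizations (x # xs))"
    proof (cases B)
      case Nil
      then have "Cs \<in> set (factorizations xs)" using Bs Cons.IH by auto
      then show ?thesis using Bs Nil by force
    next
      case Cons
      then have "B # Cs \<in> set (factorizations xs)" using Bs Cons.IH by auto
      then show ?thesis using Bs by force
    qed
  qed
qed

lemma BR_rich_iff_factorizations:
  "w \<noteq> [] \<Longrightarrow> BR_rich w \<longleftrightarrow> (\<forall>Bs \<in> set (factorizations w). rich (concat (rev Bs)))"
  unfolding BR_rich_def BR_def set_factorizations by fastforce

lemma rich_code: "rich w \<longleftrightarrow> length (remdups [u \<leftarrow> sublists w. u \<noteq> [] \<and> rev u = u]) = length w"
proof -
  have "palfactors w = set [u \<leftarrow> sublists w. u \<noteq> [] \<and> rev u = u]"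
    by (auto simp: palfactors_def)
  then show ?thesis
    by (simp add: rich_iff_card_palfactors length_remdups_card_conv)
qed

section \<open>Words with four runs\<close>

definition four_runs :: "'a \<Rightarrow> 'a \<Rightarrow> nat \<Rightarrow> nat \<Rightarrow> nat \<Rightarrow> nat \<Rightarrow> 'a list" where
  "four_runs x y p q r s = replicate p x @ replicate q y @ replicate r x @ replicate s y"

lemma BR_rich_four_runs_reverse_iff:
  assumes "x \<noteq> y"
  shows "BR_rich (four_runs x y s r q p) \<longleftrightarrow> BR_rich (four_runs x y p q r s)"
proof -
  have "four_runs x y s r q p = rev (compl_ab x y (four_runs x y p q r s))"
    using assms by (simp add: four_runs_def compl_ab_def)
  then show ?thesis
    by (simp add: BR_rich_rev_iff BR_rich_compl_ab_iff)
qed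

lemma not_BR_rich_by_frame:
  assumes "concat Bs = w" "w \<noteq> []"
    and "concat (rev Bs) = u @ [y, y] @ replicate m x @ [y] @ replicate n x @ [y, y] @ v"
    and "y \<noteq> x" "m \<noteq> n" "0 < m" "0 < n"
  shows "\<not> BR_rich w"
proof -
  have "\<not> rich (concat (rev Bs))"
    using rich_sublist[of _ "[y, y] @ replicate m x @ [y] @ replicate n x @ [y, y]"]
      not_rich_frame[OF assms(4-7)] assms(3)
    by (metis append.assoc sublist_appendI)
  then show ?thesis
    using concat_rev_in_BR[OF assms(1,2)] unfolding BR_rich_def by blast
qed

text \<open>Each of the next four lemmas cuts the word into blocks whose reversal contains the frame
  \<open>y y x\<^sup>m y x\<^sup>n y y\<close>; where present, the offset \<open>i\<close> moves a cut inside an \<open>x\<close>-run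
  so that \<open>m\<close> differs from the other \<open>x\<close>-run.\<close>
lemma not_BR_rich_four_runs_s_ge3:
  assumes "x \<noteq> y" "2 \<le> q" "3 \<le> s" "0 < m" "0 < p" "m \<noteq> p"
  shows "\<not> BR_rich (four_runs x y p q (i + m) s)"
proof -
  obtain q' s' where qs: "q = Suc (Suc q')" "s = Suc (Suc (Suc s'))"
    using le_Suc_ex[OF assms(2)] le_Suc_ex[OF assms(3)] by (auto simp: numeral_3_eq_3)
  show ?thesis
    by (rule not_BR_rich_by_frame[where Bs = "[replicate p x @ replicate q y @ replicate i x,
          replicate m x @ [y], replicate (s - 1) y]" and u = "replicate s' y"
          and v = "replicate q' y @ replicate i x" and x = x and y = y and m = m and n = p])
      (use assms in \<open>simp_all add: four_runs_def qs replicate_add replicate_app_Cons_same\<close>)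
qed

lemma not_BR_rich_four_runs_unit_q:
  assumes "x \<noteq> y" "4 \<le> s" "0 < m" "0 < r" "m \<noteq> r"
  shows "\<not> BR_rich (four_runs x y (i + m) 1 r s)"
proof -
  obtain s' where s: "s = Suc (Suc (Suc (Suc s')))"
    using le_Suc_ex[OF assms(2)] by (auto simp: numeral_eq_Suc)
  show ?thesis
    by (rule not_BR_rich_by_frame[where Bs = "[replicate i x,
          replicate m x @ [y] @ replicate r x @ [y, y], replicate (s - 2) y]"
          and u = "replicate s' y" and v = "replicate i x" and x = x and y = y and m = m and n = r])
      (use assms in \<open>simp_all add: four_runs_def s replicate_add replicate_app_Cons_same\<close>)
qed

lemma not_BR_rich_four_runs_unit_s:
  assumes "x \<noteq> y" "4 \<le> q" "0 < m" "0 < r" "m \<noteq> r"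
  shows "\<not> BR_rich (four_runs x y (i + m) q r 1)"
proof -
  obtain q' where q: "q = Suc (Suc (Suc (Suc q')))"
    using le_Suc_ex[OF assms(2)] by (auto simp: numeral_eq_Suc)
  show ?thesis
    by (rule not_BR_rich_by_frame[where Bs = "[replicate i x, replicate m x @ [y, y],
          replicate (q - 2) y @ replicate r x @ [y]]"
          and u = "replicate q' y" and v = "replicate i x" and x = x and y = y and m = r and n = m])
      (use assms in \<open>simp_all add: four_runs_def q replicate_add replicate_app_Cons_same\<close>)
qed

lemma not_BR_rich_four_runs_q_ge3:
  assumes "x \<noteq> y" "3 \<le> q" "2 \<le> s" "0 < p" "0 < r" "3 \<le> p + r"
  shows "\<not> BR_rich (four_runs x y p q r s)"
proof -
  obtain q' r' s' where qrs: "q = Suc (Suc (Suc q'))" "r = Suc r'" "s = Suc (Suc s')"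
    using le_Suc_ex[OF assms(2)] le_Suc_ex[OF assms(3)] assms(5)
    by (auto simp: numeral_eq_Suc dest: gr0_implies_Suc)
  show ?thesis
    by (rule not_BR_rich_by_frame[where Bs = "[replicate p x @ replicate (q - 1) y,
          y # replicate r' x, [x], replicate s y]"
          and u = "replicate s' y" and v = "replicate q' y" and x = x and y = y
          and m = 1 and n = "r' + p"])
      (use assms in \<open>simp_all add: four_runs_def qrs replicate_add replicate_app_Cons_same
         replicate_append_same\<close>)
qed

lemma not_BR_rich_if_long_y_runs:
  assumes "x \<noteq> y" "0 < p" "0 < q" "0 < r" "0 < s" "3 \<le> p + r" "5 \<le> q + s"
  shows "\<not> BR_rich (four_runs x y p q r s)"
proof -
  have split: "\<exists>i m. k = i + m \<and> 0 < m \<and> m \<noteq> l" if "0 < k" "3 \<le> k + l" for k l :: nat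
  proof (cases "k = l")
    case True
    then show ?thesis using that by (intro exI[of _ 1] exI[of _ "k - 1"]) auto
  next
    case False
    then show ?thesis using that by (intro exI[of _ 0] exI[of _ k]) auto
  qed
  consider "q = 1" | "q = 2" | "3 \<le> q" "2 \<le> s" | "s = 1"
    using assms by linarith
  then show ?thesis
  proof cases
    case 1
    obtain i m where "p = i + m" "0 < m" "m \<noteq> r"
      using split[of p r] assms by auto
    then show ?thesis using not_BR_rich_four_runs_unit_q[of x y s m r i] assms 1 by simp
  next
    case 2
    obtain i m where "r = i + m" "0 < m" "m \<noteq> p"
      using split[of r p] assms by auto
    then show ?thesis using not_BR_rich_four_runs_s_ge3[of x y q s m p i] assms 2 by simp
  next
    case 3
    then show ?thesis using not_BR_rich_four_runs_q_ge3[of x y q s p r] assms by simp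
  next
    case 4
    obtain i m where "p = i + m" "0 < m" "m \<noteq> r"
      using split[of p r] assms by auto
    then show ?thesis using not_BR_rich_four_runs_unit_s[of x y q m r i] assms 4 by simp
  qed
qed

lemma not_BR_rich_four_runs:
  assumes "x \<noteq> y" "0 < p" "0 < q" "0 < r" "0 < s" "3 \<le> p + r" "3 \<le> q + s"
    and "5 \<le> p + r \<or> 5 \<le> q + s"
  shows "\<not> BR_rich (four_runs x y p q r s)"
  using assms(8)
proof
  assume "5 \<le> p + r"
  then show ?thesis
    using not_BR_rich_if_long_y_runs[of x y s r q p] assms
    by (simp add: BR_rich_four_runs_reverse_iff)
next
  assume "5 \<le> q + s"
  then show ?thesis
    using not_BR_rich_if_long_y_runs[of x y p q r s] assms by simp
qed

lemma good_form_if_BR_rich_four_runs: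
  assumes "x \<noteq> y" "0 < p" "0 < q" "0 < r" "0 < s" "7 < p + q + r + s"
    and "BR_rich (four_runs x y p q r s)"
  shows "good_form x y (four_runs x y p q r s)"
proof -
  have pairs: "(k, l) \<in> {(3, 1), (2, 2), (1, 3)}" if "k + l = 4" "0 < k" "0 < l" for k l :: nat
    using that by (cases "k = 1 \<or> k = 2 \<or> k = 3") auto
  consider "p = 1" "r = 1" | "q = 1" "s = 1" | "p + r = 4" "q + s = 4"
    using not_BR_rich_four_runs[OF assms(1-5)] assms(2-7) by linarith
  then show ?thesis
  proof cases
    case 1
    then have "four_runs x y p q r s = [x] @ replicate q y @ [x] @ replicate s y"
      by (simp add: four_runs_def)
    then show ?thesis
      unfolding good_form_def using assms(3,5) by (intro disjI1 exI[of _ q] exI[of _ s]) simp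
  next
    case 2
    then have eq: "four_runs x y p q r s = replicate p x @ [y] @ replicate r x @ [y]"
      by (simp add: four_runs_def)
    show ?thesis
      unfolding good_form_def
      by (rule disjI2, rule disjI1, intro exI[of _ p] exI[of _ r]) (use eq assms(2,4) in simp)
  next
    case 3
    then have "(p, r) \<in> {(3, 1), (2, 2), (1, 3)}" "(q, s) \<in> {(3, 1), (2, 2), (1, 3)}"
      using pairs[of p r] pairs[of q s] assms(2-5) by simp_all
    then show ?thesis
      unfolding good_form_def four_runs_def
      by (intro disjI2 exI[of _ p] exI[of _ q] exI[of _ r] exI[of _ s]) simp
  qed
qed

lemma BR_rich_exceptional_bool:
  assumes "(p, r) \<in> {(3, 1), (2, 2), (1, 3)}" "(q, s) \<in> {(3, 1), (2, 2), (1, 3)}"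
  shows "BR_rich (four_runs True False p q r s)"
proof -
  have "\<forall>(p, r) \<in> {(3, 1), (2, 2), (1, 3)}. \<forall>(q, s) \<in> {(3, 1), (2, 2), (1, 3)}.
      \<forall>Bs \<in> set (factorizations (four_runs True False p q r s)).
        length (remdups [u \<leftarrow> sublists (concat (rev Bs)). u \<noteq> [] \<and> rev u = u])
        = length (concat (rev Bs))"
    by code_simp
  note this[unfolded Ball_def, rule_format, OF assms(1), unfolded prod.case,
      rule_format, OF assms(2), unfolded prod.case]
  moreover have "four_runs True False p q r s \<noteq> []"
    using assms(1) by (auto simp: four_runs_def)
  ultimately show ?thesis
    by (simp add: BR_rich_iff_factorizations rich_code)
qed

lemma BR_rich_exceptional:
  assumes "x \<noteq> y" "(p, r) \<in> {(3, 1), (2, 2), (1, 3)}" "(q, s) \<in> {(3, 1), (2, 2), (1, 3)}"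
  shows "BR_rich (four_runs x y p q r s)"
proof -
  let ?h = "\<lambda>b. if b then x else y"
  have "inj ?h"
    using assms(1) by (auto simp: inj_def)
  moreover have "four_runs x y p q r s = map ?h (four_runs True False p q r s)"
    by (simp add: four_runs_def)
  ultimately show ?thesis
    using BR_rich_exceptional_bool[OF assms(2,3)] by (simp add: BR_rich_map_iff)
qed

lemma BR_rich_if_good_form:
  assumes "x \<noteq> y" "good_form x y w"
  shows "BR_rich w"
  using assms(2) unfolding good_form_def
proof (elim disjE exE conjE)
  fix n2 n4 assume "w = [x] @ replicate n2 y @ [x] @ replicate n4 y"
  then show ?thesis
    using assms(1) by (intro BR_rich_if_two_occurrences[of x y]) auto
next
  fix n1 n3 assume "w = replicate n1 x @ [y] @ replicate n3 x @ [y]"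
  then show ?thesis
    using assms(1) by (intro BR_rich_if_two_occurrences[of y x]) auto
next
  fix n1 n2 n3 n4
  assume "(n2, n4) \<in> {(3, 1), (2, 2), (1, 3)}" "(n1, n3) \<in> {(3, 1), (2, 2), (1, 3)}"
    "w = replicate n1 x @ replicate n2 y @ replicate n3 x @ replicate n4 y"
  then show ?thesis
    using BR_rich_exceptional[OF assms(1)] by (simp add: four_runs_def)
qed

lemma remdups_adj_eq_Cons_conv:
  assumes "remdups_adj w = c # cs"
  obtains n w' where "0 < n" "w = replicate n c @ w'" "remdups_adj w' = cs"
proof -
  have "w \<noteq> []" "hd w = c"
    using assms hd_remdups_adj[of w] by auto
  then obtain xs where w: "w = c # xs"
    by (cases w) auto
  let ?t = "takeWhile (\<lambda>y. y = c) xs" and ?d = "dropWhile (\<lambda>y. y = c) xs"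
  have "?t = replicate (length ?t) c"
    by (metis (full_types) set_takeWhileD replicate_length_same)
  then have "w = replicate (Suc (length ?t)) c @ ?d"
    by (metis w takeWhile_dropWhile_id append_Cons replicate_Suc)
  moreover have "remdups_adj ?d = cs"
    using assms by (simp add: w remdups_adj_Cons')
  ultimately show ?thesis using that by blast
qed

lemma four_runs_decomposition:
  assumes "a \<noteq> b" "set w \<subseteq> {a, b}" "runs w = 4"
  obtains p q r s where "0 < p" "0 < q" "0 < r" "0 < s"
    "w = four_runs a b p q r s \<or> compl_ab a b w = four_runs a b p q r s"
proof -
  obtain c1 c2 c3 c4 where rw: "remdups_adj w = [c1, c2, c3, c4]"
    using assms(3) unfolding runs_def by (auto simp: numeral_eq_Suc length_Suc_conv)
  have "c1 \<noteq> c2" "c2 \<noteq> c3" "c3 \<noteq> c4"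
    using remdups_adj_adjacent[of 0 w] remdups_adj_adjacent[of 1 w] remdups_adj_adjacent[of 2 w]
    by (simp_all add: rw)
  moreover have "{c1, c2, c3, c4} \<subseteq> {a, b}"
    using assms(2) remdups_adj_set[of w] by (simp add: rw)
  ultimately have letters: "c1 = a \<and> c2 = b \<or> c1 = b \<and> c2 = a" "c3 = c1" "c4 = c2"
    by auto
  obtain p w1 where "0 < p" "w = replicate p c1 @ w1" "remdups_adj w1 = [c2, c3, c4]"
    using rw by (rule remdups_adj_eq_Cons_conv)
  moreover obtain q w2 where "0 < q" "w1 = replicate q c2 @ w2" "remdups_adj w2 = [c3, c4]"
    using calculation(3) by (rule remdups_adj_eq_Cons_conv)
  moreover obtain r w3 where "0 < r" "w2 = replicate r c3 @ w3" "remdups_adj w3 = [c4]"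
    using calculation(6) by (rule remdups_adj_eq_Cons_conv)
  moreover obtain s w4 where "0 < s" "w3 = replicate s c4 @ w4" "remdups_adj w4 = []"
    using calculation(9) by (rule remdups_adj_eq_Cons_conv)
  ultimately show ?thesis
    using that letters assms(1) by (auto simp: four_runs_def compl_ab_def)
qed

theorem mainTheorem12:
  fixes a b :: 'a and w :: "'a list"
  assumes "a \<noteq> b"
    and "set w \<subseteq> {a, b}"
    and "length w > 7"
    and "runs w = 4"
  shows "(\<forall>v \<in> BR w. rich v) \<longleftrightarrow> (good_form a b w \<or> good_form a b (compl_ab a b w))"
proof -
  obtain p q r s where pos: "0 < p" "0 < q" "0 < r" "0 < s"
    and w: "w = four_runs a b p q r s \<or> compl_ab a b w = four_runs a b p q r s"
    using four_runs_decomposition[OF assms(1,2,4)] .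
  have "length (compl_ab a b w) = length w"
    by (simp add: compl_ab_def)
  then have "7 < p + q + r + s"
    using assms(3) w by (auto simp: four_runs_def)
  note good_form_if_BR_rich = good_form_if_BR_rich_four_runs[OF assms(1) pos this]
  have "BR_rich w \<longleftrightarrow> good_form a b w \<or> good_form a b (compl_ab a b w)"
    using w good_form_if_BR_rich BR_rich_if_good_form[OF assms(1)] BR_rich_compl_ab_iff[of a b w]
    by auto
  then show ?thesis
    unfolding BR_rich_def .
qed

end
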